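(* Let $\mathscr{D}_n$ be the set of derangements of $[n]=\{1,\dots,n\}$. For every integer $m\ge 2$ and every $0\le r\le m-1$, $$\lim_{n\to\infty}\frac{\left|\{\pi\in\mathscr{D}_n:\ \mathrm{maj}(\pi)\equiv r\pmod m\}\right|}{|\mathscr{D}_n|}=\frac1m .$$ That is, the major index over derangements of $[n]$ has the balanced property.
   Context: A derangement of $[n]$ is a permutation $\pi=\pi_1\pi_2\cdots\pi_n$ of $[n]$ with $\pi_i\ne i$ for all $i$. The major index of a permutation $\pi=\pi_1\cdots\pi_n$ is $\mathrm{maj}(\pi)=\sum_{i:\,\pi_i>\pi_{i+1}} i$. A statistic $\xi$ on sets $Q_n$ has the balanced property if for every $m\ge 2$ and every $0\le r\le m-1$, $\lim_{n\to\infty}|\{\pi\in Q_n:\xi(\pi)\equiv r \pmod m\}|/|Q_n| = 1/m$. *)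

theory Defs
  imports Complex_Main "HOL-Combinatorics.Permutations"
begin

text \<open>A permutation pi = pi_1 ... pi_n of [n] = {1..n} is represented by the list
  [pi_1, ..., pi_n]; entry pi_i is the list element at (0-based) position i - 1.\<close>

definition perms_of :: "nat \<Rightarrow> nat list set" where
  "perms_of n = {xs. mset xs = mset [1..<n+1]}"

definition derangements :: "nat \<Rightarrow> nat list set" where
  "derangements n = {xs \<in> perms_of n. \<forall>i<n. xs ! i \<noteq> i + 1}"

definition maj :: "nat list \<Rightarrow> nat" where
  "maj xs = (\<Sum>i\<in>{i. 1 \<le> i \<and> i < length xs \<and> xs ! (i - 1) > xs ! i}. i)"

end

theory Submission
  imports Defs "HOL-Combinatorics.Multiset_Permutations"
begin

(* Write n = N + 1.  Removing the maximal letter N + 1 from a derangement of [N + 1]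
   leaves a permutation s of [N]; conversely the derangements arise exactly by inserting
   N + 1 into some s at one of its admissible positions, and these positions form an
   interval W of positions.  Along W the major index of the insertion is, on the positions
   that are descents of s, a constant plus the number of later such positions in W, and on
   the remaining positions a constant plus the number of earlier such positions in W.
   Hence within each fibre every residue class mod m is hit |W|/m times up to an error 2,
   and summing over the N! fibres gives
      |m * #{pi in D(N+1). maj pi = r (mod m)} - |D(N+1)|| <= 2 m N!.
   Together with the lower bound N! (N+1) <= 3 |D(N+1)|, obtained from two injections that
   realise the recurrence D(M+2) >= (M+1) (D(M+1) + D(M)), the ratio differs from 1/m by at
   most 6/n, which tends to 0. *)


lemma mod_eq_in_window:
  fixes a k1 k2 m :: nat
  assumes "(a + k1) mod m = (a + k2) mod m" "k1 < k2 + m" "k2 < k1 + m"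
  shows "k1 = k2"
proof (rule ccontr)
  assume ne: "k1 \<noteq> k2"
  { fix x y :: nat assume xy: "x < y" "y < x + m" "(a + x) mod m = (a + y) mod m"
    have "m dvd ((a + y) - (a + x))"
      using xy(3) mod_eq_dvd_iff_nat[of "a + x" "a + y" m] xy(1) by simp
    then have "m dvd (y - x)" by simp
    moreover have "0 < y - x" "y - x < m" using xy by auto
    ultimately have False using nat_dvd_not_less by blast }
  then show False using assms ne by (metis linorder_neqE_nat)
qed

definition residue_count :: "nat \<Rightarrow> nat \<Rightarrow> nat \<Rightarrow> nat \<Rightarrow> nat" where
  "residue_count m r a L = card {k. k < L \<and> (a + k) mod m = r}"

lemma residue_in_window:
  fixes m r a L :: nat
  assumes m: "0 < m" and r: "r < m"
  shows "card {k. L \<le> k \<and> k < L + m \<and> (a + k) mod m = r} = 1"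
proof -
  define k0 where "k0 = L + (r + m - (a + L) mod m) mod m"
  have k0_window: "L \<le> k0" "k0 < L + m" using m by (auto simp: k0_def)
  have "(a + k0) mod m = ((a + L) + (r + m - (a + L) mod m) mod m) mod m"
    by (simp add: k0_def add.assoc)
  also have "\<dots> = ((a + L) + (r + m - (a + L) mod m)) mod m"
    by (rule mod_add_right_eq)
  also have "\<dots> = ((a + L) mod m + (r + m - (a + L) mod m)) mod m"
    by (rule mod_add_left_eq[symmetric])
  also have "\<dots> = (r + m) mod m"
  proof -
    have "(a + L) mod m < m" using m by simp
    then have "(a + L) mod m + (r + m - (a + L) mod m) = r + m" by simp
    then show ?thesis by simp
  qed
  also have "\<dots> = r" using r by simp
  finally have k0_res: "(a + k0) mod m = r" .
  have "{k. L \<le> k \<and> k < L + m \<and> (a + k) mod m = r} = {k0}"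
  proof (intro equalityI subsetI)
    fix k assume "k \<in> {k. L \<le> k \<and> k < L + m \<and> (a + k) mod m = r}"
    then have "k = k0"
      using k0_window k0_res by (intro mod_eq_in_window[of a k m k0]) auto
    then show "k \<in> {k0}" by simp
  qed (use k0_window k0_res in auto)
  then show ?thesis by simp
qed

lemma residue_count_short:
  assumes "0 < m" "r < m" "L \<le> m"
  shows "residue_count m r a L \<le> 1"
proof -
  have "{k. k < L \<and> (a + k) mod m = r} \<subseteq> {k. 0 \<le> k \<and> k < 0 + m \<and> (a + k) mod m = r}"
    using assms(3) by auto
  from card_mono[OF _ this] show ?thesis
    using residue_in_window[OF assms(1,2), of 0 a] by (simp add: residue_count_def)
qed

lemma residue_count_step:
  assumes "0 < m" "r < m"
  shows "residue_count m r a (L + m) = residue_count m r a L + 1"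
proof -
  have "{k. k < L + m \<and> (a + k) mod m = r}
      = {k. k < L \<and> (a + k) mod m = r} \<union> {k. L \<le> k \<and> k < L + m \<and> (a + k) mod m = r}"
    by auto
  moreover have "card ({k. k < L \<and> (a + k) mod m = r} \<union> {k. L \<le> k \<and> k < L + m \<and> (a + k) mod m = r})
       = card {k. k < L \<and> (a + k) mod m = r} + card {k. L \<le> k \<and> k < L + m \<and> (a + k) mod m = r}"
    by (rule card_Un_disjoint) auto
  ultimately show ?thesis
    using residue_in_window[OF assms] by (simp add: residue_count_def)
qed

lemma residue_count_balance:
  assumes m: "0 < m" and r: "r < m"
  shows "\<bar>real m * real (residue_count m r a L) - real L\<bar> \<le> real m"
proof (induction L rule: less_induct)
  case (less L)
  show ?case
  proof (cases "L < m")
    case True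
    then have "real (residue_count m r a L) \<le> 1"
      using residue_count_short[OF m r] by simp
    then have "real m * real (residue_count m r a L) \<le> real m"
      using mult_left_mono[of _ 1 "real m"] by simp
    moreover have "real L \<le> real m" using True by simp
    moreover have "0 \<le> real m * real (residue_count m r a L)" by simp
    ultimately show ?thesis unfolding abs_le_iff by linarith
  next
    case False
    then obtain L' where L': "L = L' + m" by (metis add.commute le_Suc_ex not_less)
    then have "\<bar>real m * real (residue_count m r a L') - real L'\<bar> \<le> real m"
      using less m by simp
    moreover have "residue_count m r a L = residue_count m r a L' + 1"
      using residue_count_step[OF m r] L' by simp
    ultimately show ?thesis using L' by (simp add: algebra_simps)
  qed
qed


(* Ranking the elements of a finite linearly ordered set from below is a bijection onto
   0, ..., card W - 1; stated here as a counting identity. *)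
context linorder
begin

lemma rank_below_count:
  assumes "finite W"
  shows "card {j\<in>W. P (card {i\<in>W. i < j})} = card {k. k < card W \<and> P k}"
  using assms
proof (induction W rule: finite_linorder_max_induct)
  case empty
  then show ?case by simp
next
  case (insert b A)
  have "b \<notin> A" using insert.hyps(2) by blast
  then have card_ins: "card (insert b A) = Suc (card A)" using insert.hyps(1) by simp
  have below_old: "{i\<in>insert b A. i < j} = {i\<in>A. i < j}" if "j \<in> A" for j
    using that insert.hyps(2) by auto
  have below_new: "{i\<in>insert b A. i < b} = A"
    using insert.hyps(2) by auto
  have "{j\<in>insert b A. P (card {i\<in>insert b A. i < j})}
      = {j\<in>A. P (card {i\<in>A. i < j})} \<union> (if P (card A) then {b} else {})"
    using below_old below_new by auto
  moreover have "{k. k < Suc (card A) \<and> P k}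
      = {k. k < card A \<and> P k} \<union> (if P (card A) then {card A} else {})"
    by (auto simp: less_Suc_eq)
  ultimately show ?case
    using insert.IH insert.hyps(1) \<open>b \<notin> A\<close>
    by (cases "P (card A)") (simp_all add: card_ins)
qed

end

lemma rank_above_count:
  assumes "finite (W :: 'a::linorder set)"
  shows "card {j\<in>W. P (card {i\<in>W. j < i})} = card {k. k < card W \<and> P k}"
  using linorder.rank_below_count[OF dual_linorder assms] .

lemma residue_balance_of_rank:
  fixes W :: "'a set" and rank :: "'a \<Rightarrow> nat"
  assumes "0 < m" "r < m"
    and rank: "\<And>P. card {j\<in>W. P (rank j)} = card {k. k < card W \<and> P k}"
    and g: "\<forall>j\<in>W. g j = c + rank j"
  shows "\<bar>real m * real (card {j\<in>W. g j mod m = r}) - real (card W)\<bar> \<le> real m"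
proof -
  have "{j\<in>W. g j mod m = r} = {j\<in>W. (c + rank j) mod m = r}"
    using g by auto
  then have "card {j\<in>W. g j mod m = r} = residue_count m r c (card W)"
    using rank[of "\<lambda>k. (c + k) mod m = r"] by (simp add: residue_count_def)
  then show ?thesis using residue_count_balance[OF assms(1,2)] by simp
qed


text \<open>Descents and insertion of a new maximum\<close>

definition descents :: "nat list \<Rightarrow> nat set" where
  "descents xs = {i. 1 \<le> i \<and> i < length xs \<and> xs ! (i - 1) > xs ! i}"

lemma maj_descents: "maj xs = \<Sum>(descents xs)"
  by (simp add: maj_def descents_def)

lemma finite_descents [simp]: "finite (descents xs)"
  by (rule finite_subset[of _ "{..<length xs}"]) (auto simp: descents_def)

definition ins :: "nat \<Rightarrow> nat \<Rightarrow> nat list \<Rightarrow> nat list" where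
  "ins v j s = take j s @ v # drop j s"

lemma length_ins [simp]: "j \<le> length s \<Longrightarrow> length (ins v j s) = Suc (length s)"
  by (simp add: ins_def)

lemma nth_ins:
  assumes "j \<le> length s" "k \<le> length s"
  shows "ins v j s ! k = (if k < j then s ! k else if k = j then v else s ! (k - 1))"
  using assms by (auto simp: ins_def nth_append nth_Cons' min_def)

lemma mset_ins: "mset (ins v j s) = mset s + {#v#}"
proof -
  have "mset (ins v j s) = mset (take j s) + mset (drop j s) + {#v#}"
    by (simp add: ins_def)
  also have "mset (take j s) + mset (drop j s) = mset s"
    by (metis append_take_drop_id mset_append)
  finally show ?thesis .
qed

lemma filter_ins: "v \<notin> set s \<Longrightarrow> filter (\<lambda>x. x \<noteq> v) (ins v j s) = s"
proof -
  assume "v \<notin> set s"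
  then have "filter (\<lambda>x. x \<noteq> v) s = s" by (auto simp: filter_id_conv)
  moreover have "filter (\<lambda>x. x \<noteq> v) (ins v j s)
      = filter (\<lambda>x. x \<noteq> v) (take j s) @ filter (\<lambda>x. x \<noteq> v) (drop j s)"
    by (simp add: ins_def)
  ultimately show ?thesis by (metis append_take_drop_id filter_append)
qed

lemma inj_ins: "v \<notin> set s \<Longrightarrow> inj_on (\<lambda>j. ins v j s) {..<Suc (length s)}"
proof (rule inj_onI)
  fix a b assume v: "v \<notin> set s" and a: "a \<in> {..<Suc (length s)}"
    and b: "b \<in> {..<Suc (length s)}" and eq: "ins v a s = ins v b s"
  have False if "x < y" "y < Suc (length s)" "ins v x s = ins v y s" for x y
  proof -
    have "ins v y s ! x = s ! x" "ins v x s ! x = v" using that(1,2) by (auto simp: nth_ins)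
    moreover have "s ! x \<in> set s" using that by auto
    ultimately show False using that(3) v by metis
  qed
  then show "a = b" using a b eq by (metis lessThan_iff linorder_neqE_nat)
qed

lemma Suc_image_mem: "i \<in> Suc ` A \<longleftrightarrow> 0 < i \<and> i - 1 \<in> A"
  by (cases i) auto

lemma descents_ins:
  assumes j: "j < length s" and v: "\<forall>x\<in>set s. x < v"
  shows "descents (ins v j s)
       = {i\<in>descents s. i < j} \<union> {Suc j} \<union> Suc ` {i\<in>descents s. j < i}"
proof (rule set_eqI)
  fix i
  let ?t = "ins v j s"
  have sv: "\<And>k. k < length s \<Longrightarrow> s ! k < v" using v by auto
  consider "i < j" | "i = j" | "i = Suc j" | "Suc j < i" "i \<le> length s" | "length s < i"
    by linarith
  then show "i \<in> descents ?t \<longleftrightarrow> i \<in> {i\<in>descents s. i < j} \<union> {Suc j} \<union> Suc ` {i\<in>descents s. j < i}"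
  proof cases
    case 1
    then show ?thesis using j by (auto simp: descents_def nth_ins Suc_image_mem)
  next
    case 2
    then show ?thesis using j sv[of "j - 1"] by (auto simp: descents_def nth_ins Suc_image_mem)
  next
    case 3
    then show ?thesis using j sv[of j] by (auto simp: descents_def nth_ins Suc_image_mem)
  next
    case 4
    have "?t ! (i - 1) = s ! (i - 1 - 1)" "?t ! i = s ! (i - 1)"
      using 4 j by (auto simp: nth_ins)
    then show ?thesis using 4 j by (auto simp: descents_def Suc_image_mem)
  next
    case 5
    then show ?thesis using j by (auto simp: descents_def Suc_image_mem)
  qed
qed

lemma maj_ins:
  assumes j: "j < length s" and v: "\<forall>x\<in>set s. x < v"
  shows "maj (ins v j s) + (if j \<in> descents s then j else 0)
       = maj s + Suc j + card {i\<in>descents s. j < i}"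
proof -
  let ?D = "descents s"
  have "maj (ins v j s) = \<Sum>({i\<in>?D. i < j} \<union> {Suc j} \<union> Suc ` {i\<in>?D. j < i})"
    by (simp add: maj_descents descents_ins[OF assms])
  also have "\<dots> = \<Sum>{i\<in>?D. i < j} + Suc j + \<Sum>(Suc ` {i\<in>?D. j < i})"
    by (subst sum.union_disjoint; auto simp: sum.union_disjoint)
  also have "\<Sum>(Suc ` {i\<in>?D. j < i}) = (\<Sum>i\<in>{i\<in>?D. j < i}. Suc i)"
    by (subst sum.reindex) auto
  also have "\<dots> = \<Sum>{i\<in>?D. j < i} + card {i\<in>?D. j < i}"
    unfolding Suc_eq_plus1 sum.distrib by simp
  finally have new: "maj (ins v j s)
      = \<Sum>{i\<in>?D. i < j} + Suc j + \<Sum>{i\<in>?D. j < i} + card {i\<in>?D. j < i}"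
    by simp
  have "?D = {i\<in>?D. i < j} \<union> (?D \<inter> {j}) \<union> {i\<in>?D. j < i}" by auto
  then have "maj s = \<Sum>({i\<in>?D. i < j} \<union> (?D \<inter> {j}) \<union> {i\<in>?D. j < i})"
    by (metis maj_descents)
  also have "\<dots> = \<Sum>({i\<in>?D. i < j} \<union> (?D \<inter> {j})) + \<Sum>{i\<in>?D. j < i}"
    by (rule sum.union_disjoint) auto
  also have "\<Sum>({i\<in>?D. i < j} \<union> (?D \<inter> {j})) = \<Sum>{i\<in>?D. i < j} + \<Sum>(?D \<inter> {j})"
    by (rule sum.union_disjoint) auto
  also have "\<Sum>(?D \<inter> {j}) = (if j \<in> ?D then j else 0)" by auto
  finally show ?thesis using new by simp
qed


lemma perms_of_eq_permutations_of_set: "perms_of N = permutations_of_set {1..N}"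
proof -
  have "mset [1..<N+1] = mset_set {1..N}"
    by (metis atLeastLessThanSuc_atLeastAtMost Suc_eq_plus1 mset_set_set distinct_upt set_upt)
  then show ?thesis
    by (simp add: perms_of_def permutations_of_set_altdef permutations_of_multiset_def)
qed

lemma card_perms_of: "card (perms_of N) = fact N"
  by (simp add: perms_of_eq_permutations_of_set)

lemma finite_perms_of [simp]: "finite (perms_of N)"
  by (simp add: perms_of_eq_permutations_of_set)

lemma perms_ofD: "xs \<in> perms_of N \<Longrightarrow> set xs = {1..N} \<and> distinct xs \<and> length xs = N"
  unfolding perms_of_eq_permutations_of_set
  by (auto dest: permutations_of_setD length_finite_permutations_of_set)

lemma derangementsD:
  "xs \<in> derangements n \<Longrightarrow> set xs = {1..n} \<and> distinct xs \<and> length xs = n \<and> (\<forall>i<n. xs ! i \<noteq> i + 1)"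
  using perms_ofD by (auto simp: derangements_def)

lemma finite_derangements [simp]: "finite (derangements n)"
  unfolding derangements_def by (rule finite_subset[of _ "perms_of n"]) auto


text \<open>Fibres of derangements over the permutation left after removing the maximum\<close>

definition admissible :: "nat \<Rightarrow> nat list \<Rightarrow> nat set" where
  "admissible N s = {j. j < N \<and> ins (Suc N) j s \<in> derangements (Suc N)}"

(* Every derangement of [N + 1] is an admissible insertion of N + 1 into a permutation of [N];
   N + 1 cannot be the last letter of a derangement. *)
lemma derangements_Suc_decomp:
  "{xs \<in> derangements (Suc N). P xs}
   = (\<Union>s\<in>perms_of N. (\<lambda>j. ins (Suc N) j s) ` {j\<in>admissible N s. P (ins (Suc N) j s)})"
proof (intro equalityI subsetI)
  fix p assume p: "p \<in> {xs \<in> derangements (Suc N). P xs}"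
  then have der: "p \<in> derangements (Suc N)" "P p" by auto
  then have mp: "mset p = mset [1..<Suc N + 1]"
    by (simp add: derangements_def perms_of_def)
  then have "Suc N \<in> set p"
    by (metis set_mset_mset atLeastLessThan_iff set_upt le_add2 lessI Suc_eq_plus1)
  then obtain xs ys where p_eq: "p = xs @ Suc N # ys" by (meson split_list)
  define s where "s = xs @ ys"
  define j where "j = length xs"
  have p_ins: "p = ins (Suc N) j s" by (simp add: p_eq ins_def s_def j_def)
  have s_perm: "s \<in> perms_of N" using mp by (simp add: perms_of_def p_eq s_def)
  have "j \<le> N" using perms_ofD[OF s_perm] by (simp add: j_def s_def)
  moreover have "p ! N \<noteq> Suc N" using der(1) by (auto simp: derangements_def)
  then have "j \<noteq> N" by (auto simp: p_eq j_def nth_append)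
  ultimately have "j \<in> {j\<in>admissible N s. P (ins (Suc N) j s)}"
    using der p_ins by (simp add: admissible_def)
  then show "p \<in> (\<Union>s\<in>perms_of N. (\<lambda>j. ins (Suc N) j s) ` {j\<in>admissible N s. P (ins (Suc N) j s)})"
    using s_perm p_ins by blast
qed (auto simp: admissible_def)

(* Counting version: the fibres are disjoint, and inside a fibre the position determines
   the insertion. *)
lemma card_derangements_Suc_decomp:
  "card {xs \<in> derangements (Suc N). P xs}
   = (\<Sum>s\<in>perms_of N. card {j\<in>admissible N s. P (ins (Suc N) j s)})"
proof -
  let ?fibre = "\<lambda>s. (\<lambda>j. ins (Suc N) j s) ` {j\<in>admissible N s. P (ins (Suc N) j s)}"
  have max_notin: "Suc N \<notin> set s" if "s \<in> perms_of N" for s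
    using perms_ofD[OF that] by auto
  have "card {xs \<in> derangements (Suc N). P xs} = (\<Sum>s\<in>perms_of N. card (?fibre s))"
    unfolding derangements_Suc_decomp
  proof (rule card_UN_disjoint)
    show "\<forall>s\<in>perms_of N. finite (?fibre s)" by (auto simp: admissible_def)
    show "\<forall>s1\<in>perms_of N. \<forall>s2\<in>perms_of N. s1 \<noteq> s2 \<longrightarrow> ?fibre s1 \<inter> ?fibre s2 = {}"
    proof (intro ballI impI equals0I)
      fix s1 s2 p assume s: "s1 \<in> perms_of N" "s2 \<in> perms_of N" "s1 \<noteq> s2"
        and "p \<in> ?fibre s1 \<inter> ?fibre s2"
      then obtain j1 j2 where "p = ins (Suc N) j1 s1" "p = ins (Suc N) j2 s2" by blast
      then have "s1 = s2" using filter_ins max_notin s(1,2) by metis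
      with s(3) show False ..
    qed
  qed simp
  also have "\<dots> = (\<Sum>s\<in>perms_of N. card {j\<in>admissible N s. P (ins (Suc N) j s)})"
  proof (rule sum.cong)
    fix s assume s: "s \<in> perms_of N"
    have "inj_on (\<lambda>j. ins (Suc N) j s) {..<Suc (length s)}"
      using inj_ins max_notin[OF s] by blast
    moreover have "{j\<in>admissible N s. P (ins (Suc N) j s)} \<subseteq> {..<Suc (length s)}"
      using perms_ofD[OF s] by (auto simp: admissible_def)
    ultimately show "card (?fibre s) = card {j\<in>admissible N s. P (ins (Suc N) j s)}"
      by (meson card_image inj_on_subset)
  qed simp
  finally show ?thesis .
qed

definition nat_interval :: "nat set \<Rightarrow> bool" where
  "nat_interval W \<longleftrightarrow> (\<forall>a\<in>W. \<forall>b\<in>W. \<forall>x. a \<le> x \<and> x \<le> b \<longrightarrow> x \<in> W)"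

(* The admissible positions form an interval: moving the maximum from a to x <= b, the
   letters left of x agree with the insertion at b and those right of x with the one at a. *)
lemma admissible_interval:
  assumes len: "length s = N"
  shows "nat_interval (admissible N s)"
  unfolding nat_interval_def
proof (intro ballI allI impI)
  fix a b x assume a: "a \<in> admissible N s" and b: "b \<in> admissible N s" and x: "a \<le> x \<and> x \<le> b"
  have "a < N" "b < N" "x < N" using a b x by (auto simp: admissible_def)
  have der_a: "ins (Suc N) a s \<in> derangements (Suc N)"
    and der_b: "ins (Suc N) b s \<in> derangements (Suc N)"
    using a b by (auto simp: admissible_def)
  have "mset (ins (Suc N) x s) = mset (ins (Suc N) a s)"
    by (simp add: mset_ins)
  then have perm: "ins (Suc N) x s \<in> perms_of (Suc N)"
    using der_a by (simp add: derangements_def perms_of_def)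
  have "ins (Suc N) x s ! i \<noteq> i + 1" if i: "i < Suc N" for i
  proof -
    consider "i < x" | "i = x" | "x < i" by linarith
    then show ?thesis
    proof cases
      case 1
      then have "ins (Suc N) x s ! i = ins (Suc N) b s ! i"
        using x i \<open>x < N\<close> \<open>b < N\<close> len by (simp add: nth_ins)
      then show ?thesis using der_b i by (simp add: derangements_def)
    next
      case 2
      then show ?thesis using \<open>x < N\<close> len by (simp add: nth_ins)
    next
      case 3
      then have "ins (Suc N) x s ! i = ins (Suc N) a s ! i"
        using x i \<open>x < N\<close> \<open>a < N\<close> len by (simp add: nth_ins)
      then show ?thesis using der_a i by (simp add: derangements_def)
    qed
  qed
  then show "x \<in> admissible N s" using perm \<open>x < N\<close> by (simp add: admissible_def derangements_def)
qed


(* Elements of T above a point j of an interval W lie in W or above all of W. *)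
lemma card_above_interval_point:
  assumes "finite T" "nat_interval W" "j \<in> W"
  shows "card {i\<in>T. j < i} = card {i\<in>W \<inter> T. j < i} + card {i\<in>T. \<forall>w\<in>W. w < i}"
proof -
  have "i \<in> W \<or> (\<forall>w\<in>W. w < i)" if "j < i" for i
    using assms(2,3) that unfolding nat_interval_def by (meson less_imp_le not_le)
  then have "{i\<in>T. j < i} = {i\<in>W \<inter> T. j < i} \<union> {i\<in>T. \<forall>w\<in>W. w < i}"
    using assms(3) by auto
  moreover have "card ({i\<in>W \<inter> T. j < i} \<union> {i\<in>T. \<forall>w\<in>W. w < i})
      = card {i\<in>W \<inter> T. j < i} + card {i\<in>T. \<forall>w\<in>W. w < i}"
    by (rule card_Un_disjoint) (use assms(1) in auto)
  ultimately show ?thesis by simp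
qed

(* Dually, the points outside T below j lie in W or below all of W. *)
lemma card_below_interval_point:
  assumes "nat_interval W" "j \<in> W"
  shows "card {i. i < j \<and> i \<notin> T} = card {i\<in>W - T. i < j} + card {i. i \<notin> T \<and> (\<forall>w\<in>W. i < w)}"
proof -
  have "i \<in> W \<or> (\<forall>w\<in>W. i < w)" if "i < j" for i
    using assms that unfolding nat_interval_def by (meson less_imp_le not_le)
  then have "{i. i < j \<and> i \<notin> T} = {i\<in>W - T. i < j} \<union> {i. i \<notin> T \<and> (\<forall>w\<in>W. i < w)}"
    using assms(2) by auto
  moreover have "finite {i. i \<notin> T \<and> (\<forall>w\<in>W. i < w)}"
    by (rule finite_subset[of _ "{..<j}"]) (use assms(2) in auto)
  then have "card ({i\<in>W - T. i < j} \<union> {i. i \<notin> T \<and> (\<forall>w\<in>W. i < w)})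
      = card {i\<in>W - T. i < j} + card {i. i \<notin> T \<and> (\<forall>w\<in>W. i < w)}"
    by (intro card_Un_disjoint) auto
  ultimately show ?thesis by simp
qed

(* Splitting 0, ..., j - 1 and T according to membership in T and position relative to j. *)
lemma point_plus_card_above:
  assumes "finite T" "j \<notin> T"
  shows "j + card {i\<in>T. j < i} = card T + card {i. i < j \<and> i \<notin> T}"
proof -
  have "{..<j} = {i. i < j \<and> i \<notin> T} \<union> {i\<in>T. i < j}" by auto
  moreover have "card ({i. i < j \<and> i \<notin> T} \<union> {i\<in>T. i < j})
      = card {i. i < j \<and> i \<notin> T} + card {i\<in>T. i < j}"
    by (rule card_Un_disjoint) auto
  ultimately have below: "j = card {i. i < j \<and> i \<notin> T} + card {i\<in>T. i < j}"
    by (metis card_lessThan)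
  have "x \<in> T \<longleftrightarrow> x \<in> {i\<in>T. i < j} \<union> {i\<in>T. j < i}" for x
    using assms(2) by (cases "x = j") auto
  then have "T = {i\<in>T. i < j} \<union> {i\<in>T. j < i}" by blast
  moreover have "card ({i\<in>T. i < j} \<union> {i\<in>T. j < i}) = card {i\<in>T. i < j} + card {i\<in>T. j < i}"
    by (rule card_Un_disjoint) (use assms(1) in auto)
  ultimately have "card T = card {i\<in>T. i < j} + card {i\<in>T. j < i}"
    by simp
  with below show ?thesis by simp
qed

lemma maj_ins_at_descent:
  assumes W: "nat_interval W" "W \<subseteq> {..<length s}" and v: "\<forall>x\<in>set s. x < v"
    and j: "j \<in> W \<inter> descents s"
  shows "maj (ins v j s) = (maj s + 1 + card {i\<in>descents s. \<forall>w\<in>W. w < i})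
                           + card {i\<in>W \<inter> descents s. j < i}"
proof -
  have "maj (ins v j s) = maj s + 1 + card {i\<in>descents s. j < i}"
    using maj_ins[of j s v] W(2) v j by auto
  then show ?thesis
    using card_above_interval_point[OF finite_descents W(1), of j] j by simp
qed

lemma maj_ins_at_non_descent:
  assumes W: "nat_interval W" "W \<subseteq> {..<length s}" and v: "\<forall>x\<in>set s. x < v"
    and j: "j \<in> W - descents s"
  shows "maj (ins v j s)
       = (maj s + 1 + card (descents s) + card {i. i \<notin> descents s \<and> (\<forall>w\<in>W. i < w)})
         + card {i\<in>W - descents s. i < j}"
proof -
  have "maj (ins v j s) = maj s + 1 + (j + card {i\<in>descents s. j < i})"
    using maj_ins[of j s v] W(2) v j by auto
  also have "j + card {i\<in>descents s. j < i} = card (descents s) + card {i. i < j \<and> i \<notin> descents s}"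
    using point_plus_card_above[OF finite_descents, of j s] j by simp
  also have "card {i. i < j \<and> i \<notin> descents s}
      = card {i\<in>W - descents s. i < j} + card {i. i \<notin> descents s \<and> (\<forall>w\<in>W. i < w)}"
    using card_below_interval_point[OF W(1), of j] j by simp
  finally show ?thesis by simp
qed

lemma fibre_residue_balance:
  assumes s: "s \<in> perms_of N" and m: "0 < m" and r: "r < m"
  shows "\<bar>real m * real (card {j\<in>admissible N s. maj (ins (Suc N) j s) mod m = r})
          - real (card (admissible N s))\<bar> \<le> 2 * real m"
proof -
  define W where "W = admissible N s"
  define D where "D = descents s"
  define g where "g j = maj (ins (Suc N) j s)" for j
  have len: "length s = N" and below_max: "\<forall>x\<in>set s. x < Suc N" using perms_ofD[OF s] by auto
  have W_int: "nat_interval W" using admissible_interval[OF len] by (simp add: W_def)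
  have W_sub: "W \<subseteq> {..<length s}" using len by (auto simp: W_def admissible_def)
  have fin: "finite W" using W_sub finite_subset by blast
  have rank_D: "card {j\<in>W \<inter> D. P (card {i\<in>W \<inter> D. j < i})} = card {k. k < card (W \<inter> D) \<and> P k}"
    for P using fin by (intro rank_above_count) simp
  have rank_nD: "card {j\<in>W - D. P (card {i\<in>W - D. i < j})} = card {k. k < card (W - D) \<and> P k}"
    for P using fin by (intro rank_below_count) simp
  have bal_D: "\<bar>real m * real (card {j\<in>W \<inter> D. g j mod m = r}) - real (card (W \<inter> D))\<bar> \<le> real m"
    using maj_ins_at_descent[OF W_int W_sub below_max]
    by (intro residue_balance_of_rank[OF m r rank_D,
          where c = "maj s + 1 + card {i\<in>D. \<forall>w\<in>W. w < i}"]) (simp add: g_def D_def)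
  have bal_nD: "\<bar>real m * real (card {j\<in>W - D. g j mod m = r}) - real (card (W - D))\<bar> \<le> real m"
    using maj_ins_at_non_descent[OF W_int W_sub below_max]
    by (intro residue_balance_of_rank[OF m r rank_nD,
          where c = "maj s + 1 + card D + card {i. i \<notin> D \<and> (\<forall>w\<in>W. i < w)}"])
       (simp add: g_def D_def)
  have "card {j\<in>W. g j mod m = r}
      = card ({j\<in>W \<inter> D. g j mod m = r} \<union> {j\<in>W - D. g j mod m = r})"
    by (rule arg_cong[where f = card]) auto
  also have "\<dots> = card {j\<in>W \<inter> D. g j mod m = r} + card {j\<in>W - D. g j mod m = r}"
    by (rule card_Un_disjoint) (use fin in auto)
  finally have split_res: "card {j\<in>W. g j mod m = r}
      = card {j\<in>W \<inter> D. g j mod m = r} + card {j\<in>W - D. g j mod m = r}" .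
  have split_all: "card W = card (W \<inter> D) + card (W - D)"
    using fin by (rule card_Int_Diff)
  have "\<bar>real m * real (card {j\<in>W. g j mod m = r}) - real (card W)\<bar> \<le> 2 * real m"
    using bal_D bal_nD unfolding split_res split_all of_nat_add distrib_left abs_le_iff
    by linarith
  then show ?thesis unfolding W_def g_def .
qed


text \<open>A lower bound for the number of derangements\<close>

(* First half of the classical recurrence D(M+2) = (M+1) (D(M+1) + D(M)): from a derangement
   r of [M+1] and a position i, put M+2 at position i and move r_i to the end. *)
definition swap_to_end :: "nat \<Rightarrow> nat list \<times> nat \<Rightarrow> nat list" where
  "swap_to_end M p = (fst p)[snd p := M+2] @ [fst p ! snd p]"

definition shift_from :: "nat \<Rightarrow> nat \<Rightarrow> nat" where
  "shift_from j x = (if x < j then x else Suc x)"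

(* Second half: from a derangement r of [M] and a value j in [M+1], renumber r to avoid j,
   put M+2 at position j and append j. *)
definition insert_split :: "nat \<Rightarrow> nat list \<times> nat \<Rightarrow> nat list" where
  "insert_split M p = ins (M+2) (snd p - 1) (map (shift_from (snd p)) (fst p)) @ [snd p]"
lemma swap_to_end_derangement:
  assumes r: "r \<in> derangements (M+1)" and i: "i < M+1"
  shows "swap_to_end M (r, i) \<in> derangements (M+2)"
proof -
  have rd: "set r = {1..M+1}" "length r = M+1" "\<forall>k<M+1. r!k \<noteq> k+1" using derangementsD[OF r] by auto
  have mr: "mset r = mset [1..<M+1+1]" using r by (simp add: derangements_def perms_of_def)
  have ri: "r ! i \<in># mset r" using i rd(2) by simp
  have "mset (swap_to_end M (r, i)) = add_mset (M+2) (mset r - {#r!i#}) + {#r!i#}"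
    using i rd by (simp add: swap_to_end_def mset_update)
  also have "\<dots> = mset r + {#M+2#}" using ri by (simp add: insert_DiffM2)
  also have "\<dots> = mset [1..<M+2+1]" using mr by simp
  finally have p: "swap_to_end M (r, i) \<in> perms_of (M+2)" by (simp add: perms_of_def)
  have "\<forall>k<M+2. swap_to_end M (r, i) ! k \<noteq> k+1"
  proof (intro allI impI)
    fix k assume k: "k < M+2"
    show "swap_to_end M (r, i) ! k \<noteq> k+1"
    proof (cases "k < M+1")
      case True
      then have "swap_to_end M (r, i) ! k = (if k = i then M+2 else r!k)"
        using rd by (simp add: swap_to_end_def nth_append)
      then show ?thesis using True rd i by auto
    next
      case False
      then have "k = M+1" using k by simp
      then have "swap_to_end M (r, i) ! k = r ! i" using rd by (simp add: swap_to_end_def nth_append)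
      moreover have "r ! i \<in> {1..M+1}" using rd i by (metis nth_mem)
      ultimately show ?thesis using \<open>k = M+1\<close> by auto
    qed
  qed
  then show ?thesis using p by (simp add: derangements_def)
qed

lemma swap_to_end_last: "length r = M+1 \<Longrightarrow> swap_to_end M (r,i) ! (M+1) = r ! i"
  by (simp add: swap_to_end_def nth_append)

lemma inj_swap_to_end: "inj_on (swap_to_end M) (derangements (M+1) \<times> {..<M+1})"
proof (rule inj_onI)
  fix p q assume p: "p \<in> derangements (M+1) \<times> {..<M+1}" and q: "q \<in> derangements (M+1) \<times> {..<M+1}"
    and e: "swap_to_end M p = swap_to_end M q"
  obtain r1 i1 where p': "p = (r1, i1)" by fastforce
  obtain r2 i2 where q': "q = (r2, i2)" by fastforce
  have r1: "set r1 = {1..M+1}" "length r1 = M+1" "i1 < M+1" using p p' derangementsD by auto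
  have r2: "set r2 = {1..M+1}" "length r2 = M+1" "i2 < M+1" using q q' derangementsD by auto
  have e1: "r1[i1 := M+2] = r2[i2 := M+2]" and e2: "r1 ! i1 = r2 ! i2"
    using e unfolding p' q' swap_to_end_def by auto
  have "r1[i1 := M+2] ! i1 = M+2" using r1 by simp
  then have "r2[i2 := M+2] ! i1 = M+2" using e1 by simp
  moreover have "i1 \<noteq> i2 \<Longrightarrow> r2[i2 := M+2] ! i1 = r2 ! i1" using r1 r2 by simp
  moreover have "r2 ! i1 \<in> set r2" using r1(2,3) r2(2) by simp
  ultimately have ii: "i1 = i2" using r2 by fastforce
  have "r1 = r1[i1 := M+2, i1 := r1 ! i1]" by simp
  also have "\<dots> = r2[i2 := M+2, i2 := r2 ! i2]" using e1 e2 ii by simp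
  also have "\<dots> = r2" by simp
  finally show "p = q" using p' q' ii by simp
qed

lemma inj_shift_from: "inj (shift_from j)"
  by (rule injI) (auto simp: shift_from_def split: if_splits)

lemma map_shift_from_upt:
  assumes "1 \<le> j" "j \<le> M+1"
  shows "map (shift_from j) [1..<M+1] = [1..<j] @ [Suc j..<M+2]"
proof -
  have h1: "[1..<M+1] = [1..<j] @ [j..<M+1]"
    using assms by (metis le_add_diff_inverse upt_add_eq_append)
  have h2: "map (shift_from j) [1..<j] = [1..<j]"
    by (rule map_idI) (auto simp: shift_from_def)
  have h3: "map (shift_from j) [j..<M+1] = map Suc [j..<M+1]"
    by (rule map_cong) (auto simp: shift_from_def)
  have h4: "Suc (M+1) = M+2" by simp
  show ?thesis unfolding h1 map_append h2 h3 map_Suc_upt h4 by (rule refl)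
qed

lemma insert_split_perm:
  assumes r: "r \<in> perms_of M" and j: "1 \<le> j" "j \<le> M+1"
  shows "insert_split M (r, j) \<in> perms_of (M+2)"
proof -
  have mr: "mset r = mset [1..<M+1]" using r by (simp add: perms_of_def)
  have "mset (map (shift_from j) r) = mset (map (shift_from j) [1..<M+1])"
    using mr by (metis mset_map)
  also have "\<dots> = mset ([1..<j] @ [Suc j..<M+2])" using map_shift_from_upt[OF j] by simp
  finally have "mset (insert_split M (r, j)) = mset ([1..<j] @ [j] @ [Suc j..<M+2] @ [M+2])"
    by (simp add: insert_split_def mset_ins)
  also have "[1..<j] @ [j] @ [Suc j..<M+2] @ [M+2] = [1..<M+2+1]"
  proof -
    have "[1..<Suc j + (M+2 - Suc j)] = [1..<Suc j] @ [Suc j..<Suc j + (M+2 - Suc j)]"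
      by (rule upt_add_eq_append) simp
    moreover have "Suc j + (M+2 - Suc j) = M+2" using j by simp
    ultimately have "[1..<M+2] = [1..<Suc j] @ [Suc j..<M+2]" by simp
    moreover have "[1..<Suc j] = [1..<j] @ [j]" using j by simp
    ultimately show ?thesis by simp
  qed
  finally show ?thesis by (simp add: perms_of_def)
qed

lemma nth_insert_split:
  assumes "length r = M" "1 \<le> j" "j \<le> M+1" "k \<le> M"
  shows "insert_split M (r, j) ! k = (if k < j - 1 then shift_from j (r ! k)
                                      else if k = j - 1 then M+2 else shift_from j (r ! (k - 1)))"
  using assms by (simp add: insert_split_def nth_append nth_ins)

lemma insert_split_derangement:
  assumes r: "r \<in> derangements M" and j: "1 \<le> j" "j \<le> M+1"
  shows "insert_split M (r, j) \<in> derangements (M+2)"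
proof -
  have len: "length r = M" and no_fix: "\<forall>k<M. r ! k \<noteq> k + 1" using derangementsD[OF r] by auto
  have "insert_split M (r, j) ! k \<noteq> k + 1" if k: "k < M+2" for k
  proof -
    consider "k = M+1" | "k < j - 1" | "k = j - 1" | "j \<le> k" "k \<le> M" using k j by linarith
    then show ?thesis
    proof cases
      case 1
      then show ?thesis using len j by (simp add: insert_split_def nth_append)
    next
      case 2
      then have "r ! k \<noteq> k + 1" "k \<le> M" using no_fix j by auto
      then show ?thesis using 2 nth_insert_split[OF len j, of k] by (simp add: shift_from_def) arith
    next
      case 3
      then show ?thesis using j nth_insert_split[OF len j, of k] by simp
    next
      case 4
      then have "r ! (k - 1) \<noteq> k" using no_fix[rule_format, of "k - 1"] j by simp
      moreover have "\<not> k < j - 1" "k \<noteq> j - 1" using 4 j by auto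
      then have "insert_split M (r, j) ! k = shift_from j (r ! (k - 1))"
        using nth_insert_split[OF len j 4(2)] by metis
      ultimately show ?thesis using 4 by (simp add: shift_from_def)
    qed
  qed
  then show ?thesis
    using insert_split_perm[OF _ j] r by (simp add: derangements_def)
qed

lemma insert_split_last: "length r = M \<Longrightarrow> 1 \<le> j \<Longrightarrow> j \<le> M+1 \<Longrightarrow> insert_split M (r,j) ! (M+1) = j"
  by (simp add: insert_split_def nth_append)

lemma insert_split_at: "length r = M \<Longrightarrow> 1 \<le> j \<Longrightarrow> j \<le> M+1 \<Longrightarrow> insert_split M (r,j) ! (j-1) = M+2"
  by (simp add: insert_split_def nth_append nth_ins)

lemma inj_insert_split: "inj_on (insert_split M) (derangements M \<times> {1..M+1})"
proof (rule inj_onI)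
  fix p q assume p: "p \<in> derangements M \<times> {1..M+1}" and q: "q \<in> derangements M \<times> {1..M+1}"
    and e: "insert_split M p = insert_split M q"
  obtain r1 j1 where p': "p = (r1, j1)" by fastforce
  obtain r2 j2 where q': "q = (r2, j2)" by fastforce
  have r1: "set r1 = {1..M}" "length r1 = M" "1 \<le> j1" "j1 \<le> M+1" using p p' derangementsD by auto
  have r2: "set r2 = {1..M}" "length r2 = M" "1 \<le> j2" "j2 \<le> M+1" using q q' derangementsD by auto
  have jj: "j1 = j2" using e insert_split_last[of r1 M j1] insert_split_last[of r2 M j2] r1 r2 p' q' by simp
  have "ins (M+2) (j1-1) (map (shift_from j1) r1) = ins (M+2) (j2-1) (map (shift_from j2) r2)"
    using e unfolding p' q' insert_split_def fst_conv snd_conv append1_eq_conv by blast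
  moreover have "M+2 \<notin> set (map (shift_from j1) r1)" using r1 by (auto simp: shift_from_def)
  moreover have "M+2 \<notin> set (map (shift_from j2) r2)" using r2 by (auto simp: shift_from_def)
  ultimately have "map (shift_from j1) r1 = map (shift_from j2) r2" by (metis filter_ins)
  then have "r1 = r2" using jj inj_shift_from by simp
  then show "p = q" using p' q' jj by simp
qed

(* The two images are disjoint: a swap_to_end word has M+2 at position i and ends in r_i,
   so equality with an insert_split word forces i = j - 1 and r_(j-1) = j, a fixed point. *)
lemma swap_to_end_neq_insert_split:
  assumes "p \<in> derangements (M+1) \<times> {..<M+1}" "q \<in> derangements M \<times> {1..M+1}"
  shows "swap_to_end M p \<noteq> insert_split M q"
proof
  assume e: "swap_to_end M p = insert_split M q"
  obtain r1 i where p': "p = (r1, i)" by fastforce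
  obtain r2 j where q': "q = (r2, j)" by fastforce
  have r1: "set r1 = {1..M+1}" "length r1 = M+1" "i < M+1" "\<forall>k<M+1. r1!k \<noteq> k+1"
    using assms(1) p' derangementsD by auto
  have r2: "length r2 = M" "1 \<le> j" "j \<le> M+1" using assms(2) q' derangementsD by auto
  have "r1 ! i = j" using e swap_to_end_last[of r1 M i] insert_split_last[of r2 M j] r1 r2 p' q' by simp
  have a1: "swap_to_end M (r1, i) ! (j-1) = M+2" using e insert_split_at[of r2 M j] r2 p' q' by simp
  have jl: "j - 1 < M+1" using r2 by simp
  have a2: "swap_to_end M (r1, i) ! (j-1) = r1[i := M+2] ! (j-1)"
    using jl r1(2) by (simp add: swap_to_end_def nth_append)
  have a3: "r1[i := M+2] ! (j-1) = (if i = j-1 then M+2 else r1 ! (j-1))"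
    by (rule nth_list_update) (use r1(2,3) in simp)
  have a4: "(if i = j-1 then M+2 else r1 ! (j-1)) = M+2" using a1 unfolding a2 a3 .
  have mem: "r1 ! (j-1) \<in> set r1" using r2 r1(2) by simp
  have "r1 ! (j-1) \<le> M+1" using mem r1(1) by simp
  then have ji: "i = j - 1" using a4 by (cases "i = j-1") simp_all
  have "r1 ! (j-1) \<noteq> (j-1)+1" using r1(4) jl by blast
  moreover have "(j-1)+1 = j" using r2(2) by simp
  ultimately show False using \<open>r1 ! i = j\<close> ji by simp
qed

lemma derangements_recurrence:
  "card (derangements (M+2)) \<ge> (M+1) * (card (derangements (M+1)) + card (derangements M))"
proof -
  let ?A = "derangements (M+1) \<times> {..<M+1}"
  let ?B = "derangements M \<times> {1..M+1}"
  have sub: "swap_to_end M ` ?A \<union> insert_split M ` ?B \<subseteq> derangements (M+2)"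
    using swap_to_end_derangement insert_split_derangement by auto
  have "card (swap_to_end M ` ?A \<union> insert_split M ` ?B) = card (swap_to_end M ` ?A) + card (insert_split M ` ?B)"
    by (rule card_Un_disjoint) (use swap_to_end_neq_insert_split in auto)
  also have "\<dots> = card ?A + card ?B"
    using card_image[OF inj_swap_to_end] card_image[OF inj_insert_split] by simp
  also have "\<dots> = (M+1) * (card (derangements (M+1)) + card (derangements M))"
    by (simp add: card_cartesian_product algebra_simps)
  finally show ?thesis using card_mono[OF finite_derangements sub] by simp
qed

lemma derangements_two: "card (derangements 2) \<ge> 1"
proof -
  have "[2,1] \<in> derangements 2"
    by (auto simp: derangements_def perms_of_def less_Suc_eq numeral_2_eq_2)
  then have "derangements 2 \<noteq> {}" by auto
  then show ?thesis using finite_derangements by (simp add: Suc_le_eq card_gt_0_iff)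
qed

(* Since D(2) = 1 and D(3) = 2, induction on the recurrence gives n! <= 3 D(n) for n >= 2. *)
lemma fact_le_three_derangements: "n \<ge> 2 \<Longrightarrow> fact n \<le> 3 * card (derangements n)"
proof (induction n rule: less_induct)
  case (less n)
  show ?case
  proof (cases "n = 2")
    case True then show ?thesis using derangements_two by (simp add: numeral_2_eq_2)
  next
    case False
    define M where "M = n - 2"
    have M: "n = M + 2" "M \<ge> 1" using less.prems False unfolding M_def by auto
    have rec: "card (derangements n) \<ge> (M+1) * (card (derangements (M+1)) + card (derangements M))"
      using derangements_recurrence M by simp
    show ?thesis
    proof (cases "M = 1")
      case True
      then have "card (derangements n) \<ge> 2 * card (derangements 2)" using rec by (simp add: numeral_2_eq_2)
      then have c2: "card (derangements n) \<ge> 2" using derangements_two by linarith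
      have "n = 3" using True M by simp
      then have "fact n = (6::nat)" by (simp add: fact_numeral)
      then show ?thesis using c2 by linarith
    next
      case False
      then have M2: "M \<ge> 2" using M by simp
      have i1: "fact (M+1) \<le> 3 * card (derangements (M+1))" using less.IH[of "M+1"] M M2 by simp
      have i2: "fact M \<le> 3 * card (derangements M)" using less.IH[of M] M M2 by simp
      have nn: "n = Suc (Suc M)" using M by simp
      have "fact n = (M+1) * (fact (M+1) + fact M)"
        unfolding nn by (simp add: algebra_simps)
      also have "\<dots> \<le> (M+1) * (3 * card (derangements (M+1)) + 3 * card (derangements M))"
        by (rule mult_le_mono2, rule add_mono[OF i1 i2])
      also have "\<dots> = 3 * ((M+1) * (card (derangements (M+1)) + card (derangements M)))"
        by (simp add: algebra_simps)
      also have "\<dots> \<le> 3 * card (derangements n)" using rec by (rule mult_le_mono2)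
      finally show ?thesis .
    qed
  qed
qed


(* Summing the fibre bound over the N! permutations of [N]. *)
lemma maj_residue_error:
  assumes m: "0 < m" and r: "r < m"
  shows "\<bar>real m * real (card {xs \<in> derangements (Suc N). maj xs mod m = r})
          - real (card (derangements (Suc N)))\<bar> \<le> 2 * real m * fact N"
proof -
  let ?hits = "\<lambda>s. card {j\<in>admissible N s. maj (ins (Suc N) j s) mod m = r}"
  have "real m * real (card {xs \<in> derangements (Suc N). maj xs mod m = r})
          - real (card (derangements (Suc N)))
      = (\<Sum>s\<in>perms_of N. real m * real (?hits s) - real (card (admissible N s)))"
    using card_derangements_Suc_decomp[of N "\<lambda>xs. maj xs mod m = r"]
          card_derangements_Suc_decomp[of N "\<lambda>_. True"]
    by (simp add: sum_subtractf sum_distrib_left)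
  also have "\<bar>\<dots>\<bar> \<le> (\<Sum>s\<in>perms_of N. \<bar>real m * real (?hits s) - real (card (admissible N s))\<bar>)"
    by (rule sum_abs)
  also have "\<dots> \<le> (\<Sum>s\<in>perms_of N. 2 * real m)"
    by (rule sum_mono) (rule fibre_residue_balance[OF _ m r])
  also have "\<dots> = 2 * real m * fact N"
    by (simp add: card_perms_of)
  finally show ?thesis .
qed

(* With N! (N+1) <= 3 |D(N+1)| the relative error is at most 6/n. *)
lemma maj_residue_ratio_error:
  assumes m: "0 < m" and r: "r < m" and n: "n \<ge> 2"
  shows "\<bar>real (card {xs \<in> derangements n. maj xs mod m = r}) / real (card (derangements n))
          - 1 / real m\<bar> \<le> 6 / real n"
proof -
  obtain N where N: "n = Suc N" using n by (cases n) auto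
  let ?a = "real (card {xs \<in> derangements n. maj xs mod m = r})"
  let ?b = "real (card (derangements n))"
  have err: "\<bar>real m * ?a - ?b\<bar> \<le> 2 * real m * fact N"
    using maj_residue_error[OF m r, of N] by (simp add: N)
  have "real (fact n) \<le> real (3 * card (derangements n))"
    using fact_le_three_derangements[OF n] by (simp only: of_nat_le_iff)
  then have lower: "real n * fact N \<le> 3 * ?b"
    by (simp add: N algebra_simps)
  have "0 < real n * fact N" using n by simp
  then have b_pos: "0 < ?b" using lower by linarith
  have frac: "a / b - 1 / c = (c * a - b) / (c * b)" if "0 < b" "0 < c" for a b c :: real
    using that by (simp add: field_simps)
  have "?a / ?b - 1 / real m = (real m * ?a - ?b) / (real m * ?b)"
    using b_pos m by (intro frac) simp_all
  then have "\<bar>?a / ?b - 1 / real m\<bar> = \<bar>real m * ?a - ?b\<bar> / (real m * ?b)"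
    using b_pos m by simp
  also have "\<dots> \<le> 2 * real m * fact N / (real m * ?b)"
    by (rule divide_right_mono[OF err]) (use b_pos m in simp)
  also have "\<dots> = 2 * fact N / ?b" using m by simp
  also have "\<dots> \<le> 6 / real n"
    using lower b_pos n by (simp add: divide_simps) (simp add: mult.commute)
  finally show ?thesis .
qed

theorem theorem2:
  fixes m r :: nat
  assumes "m \<ge> 2" and "r \<le> m - 1"
  shows "(\<lambda>n. real (card {xs \<in> derangements n. maj xs mod m = r})
                / real (card (derangements n)))
         \<longlonglongrightarrow> 1 / real m"
proof -
  have m: "0 < m" and r: "r < m" using assms by auto
  have "(\<lambda>n. real (card {xs \<in> derangements n. maj xs mod m = r}) / real (card (derangements n))
             - 1 / real m) \<longlonglongrightarrow> 0"
  proof (rule tendsto_0_le[OF lim_inverse_n', where K = 6])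
    show "\<forall>\<^sub>F n in sequentially.
        norm (real (card {xs \<in> derangements n. maj xs mod m = r}) / real (card (derangements n))
              - 1 / real m) \<le> norm (1 / real n) * 6"
      using maj_residue_ratio_error[OF m r]
      by (intro eventually_sequentiallyI[of 2]) simp
  qed
  then show ?thesis by (rule LIM_zero_cancel)
qed

end
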